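(* Let $E$ be a regular biordered set satisfying (E1), (E2), (E3) below, and let $e_1,\dots,e_n\in E$ satisfy $M(e_i,e_j)=\{0\}$ for all $i\ne j$. Then the element $e_1\oplus e_2\oplus\cdots\oplus e_n$ is well defined (inductively, $((e_1\oplus e_2)\oplus e_3)\oplus\cdots$, each step being defined), the elements $\mathcal L(e_1),\dots,\mathcal L(e_n)$ are independent in the lattice $L(E)=E/\mathcal L$, and $\mathcal L(e_1)\vee\cdots\vee\mathcal L(e_n)=\mathcal L(e_1\oplus\cdots\oplus e_n)$. Conditions: (E1) there exists $0\in E$ with $0\,\omega\,x$ for every $x\in E$; (E2) there is a map $x\mapsto x'$ on $E$ such that for all $x,y\in E$: $(x')'=x$; $y\,\omega^l\,x$ iff $x'\,\omega^r\,y'$; $y\,\omega^l\,x'$ iff $M(y,x)=\{0\}$; (E3) for all $x,y\in E$, if $y\,\omega\,x'$ then $S(x',y')\cap S(y',x')\ne\emptyset$.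
   Context: A regular biordered set is a partial algebra isomorphic to the set of idempotents $E(S)$ of a regular semigroup $S$ (regular: every $x$ has $y$ with $xyx=x$), where $ef$ (computed in $S$) is defined when $\{ef,fe\}\cap\{e,f\}\ne\emptyset$. In $E$: $\omega^l=\{(e,f): ef=e\}$, $\omega^r=\{(e,f): fe=e\}$, $\omega=\omega^l\cap\omega^r$; $M(e,f)=\{g\in E: g\,\omega^l\,e,\ g\,\omega^r\,f\}$; for $g,h\in M(e,f)$, $g\preceq h$ iff $eg\,\omega^r\,eh$ and $gf\,\omega^l\,hf$; $S(e,f)=\{h\in M(e,f): g\preceq h\text{ for all }g\in M(e,f)\}$. Under (E1)–(E3), for $f\,\omega\,e'$ the set $S(e',f')\cap S(f',e')$ has exactly one element $k$, and $e\oplus f:=k'$ (defined only when $f\,\omega\,e'$). $\mathcal L=\omega^l\cap(\omega^l)^{-1}$ with classes $\mathcal L(e)$; $E/\mathcal L$ is ordered by $\mathcal L(e)\le\mathcal L(f)$ iff $e\,\omega^l\,f$ (a lattice with least element $\mathcal L(0)$). Elements $a_1,\dots,a_n$ of a lattice with least element $0$ are independent if $a_i\wedge\bigvee_{j\ne i}a_j=0$ for each $i$. *)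

theory Defs
  imports Main
begin

text \<open>A regular biordered set is (up to isomorphism) the set of idempotents of a
regular semigroup S; we model S as a type of class semigroup_mult (with a
regularity assumption) and E as its set of idempotents.\<close>

definition regular_sg :: "'a::semigroup_mult itself \<Rightarrow> bool" where
  "regular_sg _ \<longleftrightarrow> (\<forall>x::'a. \<exists>y. x * y * x = x)"

definition Idem :: "'a::semigroup_mult set" where
  "Idem = {x. x * x = x}"

definition omega_l :: "'a::semigroup_mult \<Rightarrow> 'a \<Rightarrow> bool" where
  "omega_l e f \<longleftrightarrow> e * f = e"

definition omega_r :: "'a::semigroup_mult \<Rightarrow> 'a \<Rightarrow> bool" where
  "omega_r e f \<longleftrightarrow> f * e = e"

definition omega :: "'a::semigroup_mult \<Rightarrow> 'a \<Rightarrow> bool" where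
  "omega e f \<longleftrightarrow> omega_l e f \<and> omega_r e f"

definition Lrel :: "'a::semigroup_mult \<Rightarrow> 'a \<Rightarrow> bool" where
  "Lrel e f \<longleftrightarrow> omega_l e f \<and> omega_l f e"

definition Mset :: "'a::semigroup_mult \<Rightarrow> 'a \<Rightarrow> 'a set" where
  "Mset e f = {g \<in> Idem. omega_l g e \<and> omega_r g f}"

definition sandwich_le :: "'a::semigroup_mult \<Rightarrow> 'a \<Rightarrow> 'a \<Rightarrow> 'a \<Rightarrow> bool" where
  "sandwich_le e f g h \<longleftrightarrow> omega_r (e * g) (e * h) \<and> omega_l (g * f) (h * f)"

definition Sset :: "'a::semigroup_mult \<Rightarrow> 'a \<Rightarrow> 'a set" where
  "Sset e f = {h \<in> Mset e f. \<forall>g \<in> Mset e f. sandwich_le e f g h}"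

definition E1 :: "'a::semigroup_mult \<Rightarrow> bool" where
  "E1 z \<longleftrightarrow> z \<in> Idem \<and> (\<forall>x \<in> Idem. omega z x)"

definition E2 :: "'a::semigroup_mult \<Rightarrow> ('a \<Rightarrow> 'a) \<Rightarrow> bool" where
  "E2 z c \<longleftrightarrow> (\<forall>x \<in> Idem. c x \<in> Idem \<and> c (c x) = x) \<and>
     (\<forall>x \<in> Idem. \<forall>y \<in> Idem. (omega_l y x \<longleftrightarrow> omega_r (c x) (c y))) \<and>
     (\<forall>x \<in> Idem. \<forall>y \<in> Idem. (omega_l y (c x) \<longleftrightarrow> Mset y x = {z}))"

definition E3 :: "('a::semigroup_mult \<Rightarrow> 'a) \<Rightarrow> bool" where
  "E3 c \<longleftrightarrow> (\<forall>x \<in> Idem. \<forall>y \<in> Idem.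
      omega y (c x) \<longrightarrow> Sset (c x) (c y) \<inter> Sset (c y) (c x) \<noteq> {})"

text \<open>e \<oplus> f := k' where k is the unique element of S(e',f') \<inter> S(f',e');
  meaningful only when f \<omega> e'.\<close>
definition oplus :: "('a::semigroup_mult \<Rightarrow> 'a) \<Rightarrow> 'a \<Rightarrow> 'a \<Rightarrow> 'a" where
  "oplus c e f = c (THE k. k \<in> Sset (c e) (c f) \<inter> Sset (c f) (c e))"

definition oplus_defined :: "('a::semigroup_mult \<Rightarrow> 'a) \<Rightarrow> 'a \<Rightarrow> 'a \<Rightarrow> bool" where
  "oplus_defined c e f \<longleftrightarrow> omega f (c e)"

text \<open>osum c e k = ((e 1 \<oplus> e 2) \<oplus> ...) \<oplus> e k, for k \<ge> 1 (indices start at 1).\<close>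
fun osum :: "('a::semigroup_mult \<Rightarrow> 'a) \<Rightarrow> (nat \<Rightarrow> 'a) \<Rightarrow> nat \<Rightarrow> 'a" where
  "osum c e 0 = undefined"
| "osum c e (Suc 0) = e 1"
| "osum c e (Suc (Suc k)) = oplus c (osum c e (Suc k)) (e (Suc (Suc k)))"

text \<open>Joins/meets in the poset E/L (ordered by \<omega>^l), expressed on representatives.\<close>
definition is_join :: "'a::semigroup_mult set \<Rightarrow> 'a \<Rightarrow> bool" where
  "is_join A j \<longleftrightarrow> j \<in> Idem \<and> (\<forall>a \<in> A. omega_l a j) \<and>
     (\<forall>u \<in> Idem. (\<forall>a \<in> A. omega_l a u) \<longrightarrow> omega_l j u)"

definition is_meet :: "'a::semigroup_mult set \<Rightarrow> 'a \<Rightarrow> bool" where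
  "is_meet A m \<longleftrightarrow> m \<in> Idem \<and> (\<forall>a \<in> A. omega_l m a) \<and>
     (\<forall>u \<in> Idem. (\<forall>a \<in> A. omega_l u a) \<longrightarrow> omega_l u m)"

end

theory Submission
  imports Defs
begin

text \<open>For k \<in> S(e',f') \<inter> S(f',e') the sandwich conditions make k a greatest lower bound
of e' and f' simultaneously for \<omega>^l and \<omega>^r.  The involution ' of (E2) reverses both
orders, so e \<oplus> f = k' is a least upper bound of e and f for both of them.  Such bounds
are unique and associative, hence e_1 \<oplus> ... \<oplus> e_n is the least upper bound of all e_i,
which gives the join formula in E/L.  Each step is defined because (E2) turns the
orthogonality M(e_i,e_j) = {0} into e_i \<omega>^l e_j', so that e_(k+1) lies \<omega>-below the
complement of the partial sum.  Independence: an element m below e_i and below the join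
of the other e_j is \<omega>^l-below both e_i and e_i', so M(m,e_i) = {0} contains e_i m, and
m = m e_i m = 0.\<close>

lemma omega_l_trans: "omega_l x y \<Longrightarrow> omega_l y w \<Longrightarrow> omega_l x w"
  unfolding omega_l_def by (metis mult.assoc)

lemma omega_r_trans: "omega_r x y \<Longrightarrow> omega_r y w \<Longrightarrow> omega_r x w"
  unfolding omega_r_def by (metis mult.assoc)

lemma omega_trans: "omega x y \<Longrightarrow> omega y w \<Longrightarrow> omega x w"
  unfolding omega_def using omega_l_trans omega_r_trans by blast

definition is_biorder_join :: "'a::semigroup_mult set \<Rightarrow> 'a \<Rightarrow> bool" where
  "is_biorder_join A g \<longleftrightarrow> g \<in> Idem \<and> (\<forall>a\<in>A. omega a g) \<and>
     (\<forall>u\<in>Idem. (\<forall>a\<in>A. omega_l a u) \<longrightarrow> omega_l g u) \<and>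
     (\<forall>u\<in>Idem. (\<forall>a\<in>A. omega_r a u) \<longrightarrow> omega_r g u)"

definition is_biorder_meet :: "'a::semigroup_mult set \<Rightarrow> 'a \<Rightarrow> bool" where
  "is_biorder_meet A k \<longleftrightarrow> k \<in> Idem \<and> (\<forall>a\<in>A. omega k a) \<and>
     (\<forall>v\<in>Idem. (\<forall>a\<in>A. omega_l v a) \<longrightarrow> omega_l v k) \<and>
     (\<forall>v\<in>Idem. (\<forall>a\<in>A. omega_r v a) \<longrightarrow> omega_r v k)"

lemma biorder_join_unique:
  assumes g: "is_biorder_join A g" and h: "is_biorder_join A h"
  shows "g = h"
proof -
  have "omega_l g h" "omega_r h g"
    using g h unfolding is_biorder_join_def omega_def by auto
  then have "g * h = g" "g * h = h" unfolding omega_l_def omega_r_def .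
  then show ?thesis by simp
qed

lemma biorder_join_singleton: "x \<in> Idem \<Longrightarrow> is_biorder_join {x} x"
  unfolding is_biorder_join_def omega_def omega_l_def omega_r_def Idem_def by simp

lemma biorder_join_insert:
  assumes g: "is_biorder_join A g" and h: "is_biorder_join {g, x} h"
  shows "is_biorder_join (insert x A) h"
  using assms omega_trans unfolding is_biorder_join_def by auto

lemma is_join_if_biorder_join: "is_biorder_join A g \<Longrightarrow> is_join A g"
  unfolding is_biorder_join_def is_join_def omega_def by blast

lemma Sset_inter_omega_r_greatest:
  assumes kab: "k \<in> Sset a b" and kba: "k \<in> Sset b a" and a: "a \<in> Idem"
    and v: "v \<in> Idem" and va: "omega_r v a" and vb: "omega_r v b"
  shows "omega_r v k"
proof -
  have av: "a * v = v" and bv: "b * v = v" using va vb unfolding omega_r_def .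
  have "v * a \<in> Mset a b"
    using a v av bv unfolding Mset_def Idem_def omega_l_def omega_r_def
    by (simp add: mult.assoc) (metis mult.assoc)
  then have "omega_r (a * (v * a)) (a * k)"
    using kab unfolding Sset_def sandwich_le_def by blast
  moreover have "a * k = k" using kba unfolding Sset_def Mset_def omega_r_def by blast
  moreover have "a * (v * a) = v * a" using av by (simp add: mult.assoc[symmetric])
  ultimately have kva: "k * (v * a) = v * a" unfolding omega_r_def by simp
  have "k * v = k * (v * (a * v))" using v av unfolding Idem_def by simp
  also have "\<dots> = (k * (v * a)) * v" by (simp add: mult.assoc)
  also have "\<dots> = v" using kva v av unfolding Idem_def by (simp add: mult.assoc)
  finally show ?thesis unfolding omega_r_def .
qed

lemma Sset_inter_omega_l_greatest:
  assumes kab: "k \<in> Sset a b" and kba: "k \<in> Sset b a" and a: "a \<in> Idem"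
    and v: "v \<in> Idem" and va: "omega_l v a" and vb: "omega_l v b"
  shows "omega_l v k"
proof -
  have va': "v * a = v" and vb': "v * b = v" using va vb unfolding omega_l_def .
  have "a * v \<in> Mset b a"
    using a v va' vb' unfolding Mset_def Idem_def omega_l_def omega_r_def
    by (simp add: mult.assoc) (metis mult.assoc)
  then have "omega_l ((a * v) * a) (k * a)"
    using kba unfolding Sset_def sandwich_le_def by blast
  moreover have "k * a = k" using kab unfolding Sset_def Mset_def omega_l_def by blast
  moreover have "(a * v) * a = a * v" using va' by (simp add: mult.assoc)
  ultimately have avk: "(a * v) * k = a * v" unfolding omega_l_def by simp
  have "v * k = (v * (a * v)) * k" using v va' unfolding Idem_def by (simp add: mult.assoc[symmetric])
  also have "\<dots> = v * ((a * v) * k)" by (simp add: mult.assoc)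
  also have "\<dots> = v" using avk v va' unfolding Idem_def by (simp add: mult.assoc[symmetric])
  finally show ?thesis unfolding omega_l_def .
qed

lemma Sset_inter_biorder_meet:
  assumes "k \<in> Sset a b" "k \<in> Sset b a" "a \<in> Idem"
  shows "is_biorder_meet {a, b} k"
proof -
  have "k \<in> Idem" "omega k a" "omega k b"
    using assms(1,2) unfolding Sset_def Mset_def omega_def by auto
  then show ?thesis
    unfolding is_biorder_meet_def
    using Sset_inter_omega_l_greatest[OF assms] Sset_inter_omega_r_greatest[OF assms] by auto
qed

lemma E2_closed: "E2 z c \<Longrightarrow> x \<in> Idem \<Longrightarrow> c x \<in> Idem"
  unfolding E2_def by blast

lemma E2_involutive: "E2 z c \<Longrightarrow> x \<in> Idem \<Longrightarrow> c (c x) = x"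
  unfolding E2_def by blast

lemma E2_omega_l_iff:
  "E2 z c \<Longrightarrow> x \<in> Idem \<Longrightarrow> y \<in> Idem \<Longrightarrow> omega_l y x \<longleftrightarrow> omega_r (c x) (c y)"
  unfolding E2_def by blast

lemma E2_omega_r_iff:
  "E2 z c \<Longrightarrow> x \<in> Idem \<Longrightarrow> y \<in> Idem \<Longrightarrow> omega_r y x \<longleftrightarrow> omega_l (c x) (c y)"
  using E2_omega_l_iff[of z c "c y" "c x"] E2_closed[of z c] E2_involutive[of z c] by auto

lemma E2_Mset_zero_iff:
  "E2 z c \<Longrightarrow> x \<in> Idem \<Longrightarrow> y \<in> Idem \<Longrightarrow> Mset y x = {z} \<longleftrightarrow> omega_l y (c x)"
  unfolding E2_def by blast

lemma E2_biorder_join_of_meet: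
  assumes e2: "E2 z c" and A: "A \<subseteq> Idem" and k: "is_biorder_meet (c ` A) k"
  shows "is_biorder_join A (c k)"
proof -
  have kI: "k \<in> Idem" using k unfolding is_biorder_meet_def by blast
  have ckI: "c k \<in> Idem" and cck: "c (c k) = k"
    using E2_closed[OF e2 kI] E2_involutive[OF e2 kI] .
  have "omega a (c k)" if "a \<in> A" for a
    using that A k E2_omega_l_iff[OF e2 ckI] E2_omega_r_iff[OF e2 ckI] cck
    unfolding is_biorder_meet_def omega_def by auto
  moreover have "omega_l (c k) u" if u: "u \<in> Idem" "\<forall>a\<in>A. omega_l a u" for u
  proof -
    have "\<forall>a\<in>A. omega_r (c u) (c a)" using u A E2_omega_l_iff[OF e2 u(1)] by auto
    then have "omega_r (c u) k" using k E2_closed[OF e2 u(1)] unfolding is_biorder_meet_def by blast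
    then show ?thesis using E2_omega_l_iff[OF e2 u(1) ckI] cck by simp
  qed
  moreover have "omega_r (c k) u" if u: "u \<in> Idem" "\<forall>a\<in>A. omega_r a u" for u
  proof -
    have "\<forall>a\<in>A. omega_l (c u) (c a)" using u A E2_omega_r_iff[OF e2 u(1)] by auto
    then have "omega_l (c u) k" using k E2_closed[OF e2 u(1)] unfolding is_biorder_meet_def by blast
    then show ?thesis using E2_omega_r_iff[OF e2 u(1) ckI] cck by simp
  qed
  ultimately show ?thesis unfolding is_biorder_join_def using ckI by blast
qed

lemma oplus_biorder_join:
  assumes e2: "E2 z c" and e3: "E3 c" and e: "e \<in> Idem" and f: "f \<in> Idem"
    and defined: "oplus_defined c e f"
  shows "is_biorder_join {e, f} (oplus c e f)"
proof -
  let ?S = "Sset (c e) (c f) \<inter> Sset (c f) (c e)"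
  have join: "is_biorder_join {e, f} (c k)" if "k \<in> ?S" for k
  proof -
    have "is_biorder_meet (c ` {e, f}) k"
      using Sset_inter_biorder_meet[of k "c e" "c f"] that E2_closed[OF e2 e] by simp
    then show ?thesis using E2_biorder_join_of_meet[OF e2] e f by simp
  qed
  have "\<exists>k. k \<in> ?S" using e3 e f defined unfolding E3_def oplus_defined_def by blast
  moreover have "k = k'" if "k \<in> ?S" "k' \<in> ?S" for k k'
  proof -
    have "k \<in> Idem" "k' \<in> Idem" using that unfolding Sset_def Mset_def by auto
    moreover have "c k = c k'" using biorder_join_unique join that by blast
    ultimately show ?thesis using E2_involutive[OF e2] by metis
  qed
  ultimately have "\<exists>!k. k \<in> ?S" by blast
  then have "(THE k. k \<in> ?S) \<in> ?S" by (rule theI')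
  then show ?thesis unfolding oplus_def using join by blast
qed

lemma E2_omega_complement_of_join:
  assumes e2: "E2 z c" and A: "A \<subseteq> Idem" and x: "x \<in> Idem"
    and g: "is_biorder_join A g"
    and orth: "\<forall>a\<in>A. Mset a x = {z} \<and> Mset x a = {z}"
  shows "omega x (c g)"
proof -
  have gI: "g \<in> Idem" using g unfolding is_biorder_join_def by blast
  have cgI: "c g \<in> Idem" and cxI: "c x \<in> Idem" using E2_closed e2 gI x by blast+
  have "\<forall>a\<in>A. omega_l a (c x)" using orth A E2_Mset_zero_iff[OF e2 x] by blast
  then have "omega_l g (c x)" using g cxI unfolding is_biorder_join_def by blast
  then have r: "omega_r x (c g)" using E2_omega_r_iff[OF e2 cgI x] E2_involutive[OF e2 gI] by simp
  have "omega_r a (c x)" if "a \<in> A" for a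
  proof -
    have aI: "a \<in> Idem" using A that by blast
    have "omega_l x (c a)" using orth that E2_Mset_zero_iff[OF e2 aI x] by blast
    then show ?thesis using E2_omega_l_iff[OF e2 E2_closed[OF e2 aI] x] E2_involutive[OF e2 aI]
      by simp
  qed
  then have "omega_r g (c x)" using g cxI unfolding is_biorder_join_def by blast
  then have "omega_l x (c g)" using E2_omega_l_iff[OF e2 cgI x] E2_involutive[OF e2 gI] by simp
  with r show ?thesis unfolding omega_def by blast
qed

lemma osum_Suc: "1 \<le> k \<Longrightarrow> osum c e (Suc k) = oplus c (osum c e k) (e (Suc k))"
  by (cases k) auto

lemma E2_omega_complement_of_prefix_join:
  assumes e2: "E2 z c"
    and eE: "\<forall>i \<in> {1..n}. e i \<in> Idem"
    and orth: "\<forall>i \<in> {1..n}. \<forall>j \<in> {1..n}. i \<noteq> j \<longrightarrow> Mset (e i) (e j) = {z}"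
    and k: "k < n" and g: "is_biorder_join (e ` {1..k}) g"
  shows "omega (e (Suc k)) (c g)"
proof (rule E2_omega_complement_of_join[OF e2 _ _ g])
  show "e ` {1..k} \<subseteq> Idem" "e (Suc k) \<in> Idem" using eE k by auto
  show "\<forall>a \<in> e ` {1..k}. Mset a (e (Suc k)) = {z} \<and> Mset (e (Suc k)) a = {z}"
  proof
    fix a assume "a \<in> e ` {1..k}"
    then obtain i where a: "a = e i" and i: "i \<in> {1..k}" by blast
    have i_n: "i \<in> {1..n}" and sk_n: "Suc k \<in> {1..n}" and ne: "i \<noteq> Suc k"
      using i k by auto
    show "Mset a (e (Suc k)) = {z} \<and> Mset (e (Suc k)) a = {z}"
      unfolding a using orth[rule_format, OF i_n sk_n ne] orth[rule_format, OF sk_n i_n ne[symmetric]]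
      by blast
  qed
qed

lemma osum_biorder_join:
  assumes e2: "E2 z c" and e3: "E3 c"
    and eE: "\<forall>i \<in> {1..n}. e i \<in> Idem"
    and orth: "\<forall>i \<in> {1..n}. \<forall>j \<in> {1..n}. i \<noteq> j \<longrightarrow> Mset (e i) (e j) = {z}"
    and k: "1 \<le> k" "k \<le> n"
  shows "is_biorder_join (e ` {1..k}) (osum c e k)"
  using k
proof (induction k rule: nat_induct_at_least)
  case base
  then have "e 1 \<in> Idem" using eE by simp
  then show ?case using biorder_join_singleton by simp
next
  case (Suc k)
  let ?g = "osum c e k"
  have kn: "k < n" using Suc.prems by simp
  have g: "is_biorder_join (e ` {1..k}) ?g" using Suc.IH kn by simp
  have gI: "?g \<in> Idem" using g unfolding is_biorder_join_def by blast
  have eI: "e (Suc k) \<in> Idem" using eE kn by simp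
  have "omega (e (Suc k)) (c ?g)"
    using E2_omega_complement_of_prefix_join[OF e2 eE orth kn g] .
  then have "is_biorder_join {?g, e (Suc k)} (oplus c ?g (e (Suc k)))"
    using oplus_biorder_join[OF e2 e3 gI eI] unfolding oplus_defined_def by blast
  then have "is_biorder_join {?g, e (Suc k)} (osum c e (Suc k))"
    by (simp only: osum_Suc[OF Suc.hyps])
  then have "is_biorder_join (insert (e (Suc k)) (e ` {1..k})) (osum c e (Suc k))"
    using biorder_join_insert[OF g] by blast
  moreover have "e ` {1..Suc k} = insert (e (Suc k)) (e ` {1..k})"
    by (simp add: atLeastAtMostSuc_conv)
  ultimately show ?case by simp
qed

lemma omega_l_self_and_complement_eq_zero:
  assumes e1: "E1 z" and e2: "E2 z c" and e: "e \<in> Idem" and m: "m \<in> Idem"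
    and me: "omega_l m e" and mce: "omega_l m (c e)"
  shows "m = z"
proof -
  have "Mset m e = {z}" using E2_Mset_zero_iff[OF e2 e m] mce by simp
  moreover have "e * m \<in> Mset m e"
    using m e me unfolding Mset_def Idem_def omega_l_def omega_r_def
    by (simp add: mult.assoc) (metis mult.assoc)
  ultimately have em: "e * m = z" by blast
  have "m = m * e * m" using m me unfolding Idem_def omega_l_def by simp
  also have "\<dots> = m * z" using em by (simp add: mult.assoc)
  also have "\<dots> = z" using e1 m unfolding E1_def omega_def omega_r_def by blast
  finally show ?thesis .
qed

lemma meet_with_orthogonal_join_eq_zero:
  assumes e1: "E1 z" and e2: "E2 z c" and e: "e \<in> Idem"
    and orth: "\<forall>a\<in>A. Mset a e = {z}" and A: "A \<subseteq> Idem"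
    and J: "is_join A J" and m: "is_meet {e, J} m"
  shows "m = z"
proof -
  have "\<forall>a\<in>A. omega_l a (c e)" using orth A E2_Mset_zero_iff[OF e2 e] by blast
  then have "omega_l J (c e)" using J E2_closed[OF e2 e] unfolding is_join_def by blast
  moreover have "m \<in> Idem" "omega_l m e" "omega_l m J" using m unfolding is_meet_def by auto
  ultimately show ?thesis
    using omega_l_self_and_complement_eq_zero[OF e1 e2 e] omega_l_trans by blast
qed

theorem proposition5p5:
  fixes z :: "'a::semigroup_mult" and c :: "'a \<Rightarrow> 'a"
    and e :: "nat \<Rightarrow> 'a" and n :: nat
  assumes reg: "regular_sg TYPE('a)"
    and e1: "E1 z" and e2: "E2 z c" and e3: "E3 c"
    and n1: "n \<ge> 1"
    and eE: "\<forall>i \<in> {1..n}. e i \<in> Idem"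
    and orth: "\<forall>i \<in> {1..n}. \<forall>j \<in> {1..n}. i \<noteq> j \<longrightarrow> Mset (e i) (e j) = {z}"
  shows "(\<forall>k. 1 \<le> k \<and> k < n \<longrightarrow> oplus_defined c (osum c e k) (e (Suc k)))
    \<and> (\<forall>i \<in> {1..n}. \<forall>j m. is_join (e ` ({1..n} - {i})) j \<longrightarrow>
           is_meet {e i, j} m \<longrightarrow> Lrel m z)
    \<and> is_join (e ` {1..n}) (osum c e n)"
proof (intro conjI allI impI ballI)
  note partial_sums = osum_biorder_join[OF e2 e3 eE orth]
  show "oplus_defined c (osum c e k) (e (Suc k))" if "1 \<le> k \<and> k < n" for k
    using E2_omega_complement_of_prefix_join[OF e2 eE orth _ partial_sums[of k]] that
    unfolding oplus_defined_def by simp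
  show "Lrel m z" if "i \<in> {1..n}" "is_join (e ` ({1..n} - {i})) J" "is_meet {e i, J} m"
    for i J m
  proof -
    have "m = z"
      using meet_with_orthogonal_join_eq_zero[OF e1 e2 _ _ _ that(2,3)] eE orth that(1) by auto
    moreover have "z \<in> Idem" using e1 unfolding E1_def by blast
    ultimately show ?thesis unfolding Lrel_def omega_l_def Idem_def by simp
  qed
  show "is_join (e ` {1..n}) (osum c e n)"
    using is_join_if_biorder_join partial_sums n1 by blast
qed

end
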